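(* Suppose Assumptions 1–6 hold. Then $$\inf_{\boldsymbol\lambda\in\Theta_{\alpha,T}}\{(\boldsymbol\lambda-Z_{T\alpha})'\mathcal I_\alpha(\boldsymbol\lambda-Z_{T\alpha})\}=\inf_{\boldsymbol\lambda\in\Lambda}\{(\boldsymbol\lambda-Z_{T\alpha})'\mathcal I_\alpha(\boldsymbol\lambda-Z_{T\alpha})\}+o_{p\alpha}(1).$$
   Context: Setting. Fix an integer $p\ge1$. $\{y_t\}$ is a real-valued time series observed for $t=-p+1,\dots,T$; write $\boldsymbol y_{t-1}=(y_{t-1},\dots,y_{t-p})$ and $\mathcal F_t=\sigma(y_s,\ s\le t)$. For $\tilde\phi=(\tilde\phi_0,\tilde\phi_1,\dots,\tilde\phi_p,\tilde\sigma^2)\in\mathbb R^{p+1}\times(0,\infty)$ let $f_t(\tilde\phi)=\tilde\sigma^{-1}\mathfrak N\big((y_t-\tilde\phi_0-\sum_{i=1}^p\tilde\phi_iy_{t-i})/\tilde\sigma\big)$ with $\mathfrak N(u)=(2\pi)^{-1/2}e^{-u^2/2}$; $\nabla f_t$ denotes the gradient with respect to $\tilde\phi$. Integers $q_1\ge0$, $q_2\ge1$ with $q_1+q_2=p+2$ and a known $(p+2)\times(p+2)$ permutation matrix $P$ are fixed; for $\beta\in\mathbb R^{q_1},\phi\in\mathbb R^{q_2}$ write $f_t(\beta,\phi)=f_t(P^{-1}(\beta,\phi))$. Given a mixing weight $\alpha_t(\alpha,\beta,\phi,\varphi)$ depending on an additional parameter $\alpha$, the two-regime mixture autoregressive log-likelihood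 is $L_T(\alpha,\beta,\phi,\varphi)=\sum_{t=1}^T\log[\alpha_tf_t(\beta,\phi)+(1-\alpha_t)f_t(\beta,\varphi)]$; the null (linear AR) log-likelihood is $L^0_T(\tilde\phi)=\sum_{t=1}^T\log f_t(\tilde\phi)$. Let $\hat{\tilde\phi}_T$ satisfy $L^0_T(\hat{\tilde\phi}_T)=\sup_{\tilde\phi\in\tilde\Phi}L^0_T(\tilde\phi)+o_p(1)$ and $\hat{\tilde\phi}_T=\tilde\phi^*+o_p(1)$. Define $LR_T(\alpha)=2[\sup_{(\beta,\phi,\varphi)\in B\times\Phi\times\Phi}L_T(\alpha,\beta,\phi,\varphi)-\sup_{\tilde\phi\in\tilde\Phi}L^0_T(\tilde\phi)]$ and $LR_T=\sup_{\alpha\in A}LR_T(\alpha)$. Notation. For random quantities $X_{T\alpha}$ indexed by $\alpha\in A$, $X_{T\alpha}=o_{p\alpha}(1)$ (resp. $O_{p\alpha}(1)$) means $\sup_{\alpha\in A}\|X_{T\alpha}\|=o_p(1)$ (resp. $O_p(1)$). $\mathcal B(A,\mathbb R^k)$ (resp. $\mathcal C(A,\mathbb R^k)$) is the space of bounded (resp. continuous) $\mathbb R^k$-valued functions on $A$ with the uniform metric; $\Rightarrow$ denotes weak convergence of processes in such spaces. A set $\Lambda\subset\mathbb R^r$ is a cone if $\lambda\in\Lambda$ implies $a\lambda\in\Lambda$ for all real $a>0$. A collection $\{\Gamma_\alpha,\alpha\in A\}$ of subsets of $\mathbb R^r$ is locally uniformly equal to $\Lambda\subset\mathbb R^r$ if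 there is $\delta>0$ with $\Gamma_\alpha\cap(-\delta,\delta)^r=\Lambda\cap(-\delta,\delta)^r$ for all $\alpha\in A$. $\lambda_{\min},\lambda_{\max}$ denote smallest/largest eigenvalues. Assumption 1. (i) $y_t=\tilde\phi^*_0+\sum_{i=1}^p\tilde\phi^*_iy_{t-i}+\tilde\sigma^*\varepsilon_t$ is a stationary linear Gaussian AR($p$) process, $\varepsilon_t$ i.i.d. $N(0,1)$ with $\varepsilon_t$ independent of $\{y_{t-j},j>0\}$, where $\tilde\phi^*$ is an interior point of a compact set $\tilde\Phi\subset\{\tilde\phi:\tilde\phi_0\in\mathbb R,\ 1-\sum_{i=1}^p\tilde\phi_iz^i\ne0\text{ for }|z|\le1,\ \tilde\sigma^2\in(0,\infty)\}$. (ii) The parameter space of $(\alpha,\beta,\phi,\varphi)$ is $A\times B\times\Phi\times\Phi$ with $A\subset\mathbb R^a$ compact and $B\subset\mathbb R^{q_1}$, $\Phi\subset\mathbb R^{q_2}$ compact such that $(\beta,\phi)\in B\times\Phi$ iff $P^{-1}(\beta,\phi)\in\tilde\Phi$; write $(\beta^*,\phi^* )=P\tilde\phi^*$. (iii) For all $t$ and all parameter values, $\alpha_t(\alpha,\beta,\phi,\varphi)$ is $\sigma(\boldsymbol y_{t-1})$-measurable and lies in $(0,1)$. Assumption 2. For each $\alpha\in A$, estimators $(\hat\beta_{T\alpha},\hat\phi_{T\alpha},\hat\varphi_{T\alpha})\in B\times\Phi\times\Phi$ satisfy (i) $L_T(\alpha,\hat\beta_{T\alpha},\hat\phi_{T\alpha},\hat\varphi_{T\alpha})=\sup_{(\beta,\phi,\varphi)\in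 B\times\Phi\times\Phi}L_T(\alpha,\beta,\phi,\varphi)+o_{p\alpha}(1)$ and (ii) $(\hat\beta_{T\alpha},\hat\phi_{T\alpha},\hat\varphi_{T\alpha})=(\beta^*,\phi^*,\phi^* )+o_{p\alpha}(1)$. Assumption 3. (i) For every $\alpha\in A$ the map $(\pi,\varpi)=\boldsymbol\pi_\alpha(\phi,\varphi)$ from $\Phi\times\Phi$ onto $\Pi_\alpha:=\boldsymbol\pi_\alpha(\Phi\times\Phi)\subset\mathbb R^{2q_2}$ is one-to-one with $\boldsymbol\pi_\alpha$ and $\boldsymbol\pi_\alpha^{-1}$ continuous. (ii) $\boldsymbol\pi_\alpha(\{(\phi,\phi):\phi\in\Phi\})=\Phi\times\{0\}$ and $\boldsymbol\pi_\alpha(\phi^*,\phi^* )=(\pi^*,0)$ with $\pi^*:=\phi^*$. (iii) $(\hat\beta_{T\alpha},\hat\pi_{T\alpha},\hat\varpi_{T\alpha})=(\beta^*,\pi^*,0)+o_{p\alpha}(1)$, where $(\hat\pi_{T\alpha},\hat\varpi_{T\alpha})=\boldsymbol\pi_\alpha(\hat\phi_{T\alpha},\hat\varphi_{T\alpha})$. The reparameterized log-likelihood is $L^\pi_T(\alpha,\beta,\pi,\varpi)=L_T(\alpha,\beta,\boldsymbol\pi_\alpha^{-1}(\pi,\varpi))$. Assumption 4. For some integer $k\ge2$ and every $\alpha\in A$, $\alpha_t(\alpha,\cdot)$ and $\boldsymbol\pi^{-1}_\alpha$ are $k$ times continuously differentiable on the interiors of $B\times\Phi\times\Phi$ and $\Pi_\alpha$,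 respectively. Assumption 5. For each $\alpha\in A$ and $(\beta,\pi,\varpi)\in B\times\Pi_\alpha$, with $\boldsymbol\theta=\boldsymbol\theta(\alpha,\beta,\pi,\varpi)$, $L^\pi_T(\alpha,\beta,\pi,\varpi)-L^\pi_T(\alpha,\beta^*,\pi^*,0)=(T^{-1/2}S_{T\alpha})'[T^{1/2}\boldsymbol\theta]-\tfrac12[T^{1/2}\boldsymbol\theta]'\mathcal I_\alpha[T^{1/2}\boldsymbol\theta]+R_T(\alpha,\beta,\pi,\varpi)$, where: (i) for each $\alpha$, $\boldsymbol\theta(\alpha,\cdot)$ maps $B\times\Pi_\alpha$ onto $\Theta_\alpha\subset\mathbb R^r$, with (a) $\boldsymbol\theta(\alpha,\beta^*,\pi^*,0)=0$ and (b) for every $\epsilon>0$ there is $\delta_\epsilon>0$ with $\inf_{\alpha\in A}\inf_{(\beta,\pi,\varpi)\in B\times\Pi_\alpha:\|(\beta,\pi,\varpi)-(\beta^*,\pi^*,0)\|\ge\epsilon}\|\boldsymbol\theta(\alpha,\beta,\pi,\varpi)\|\ge\delta_\epsilon$; (ii) $S_{T\alpha}=\sum_{t=1}^Ts_{t\alpha}$ is an $\mathbb R^r$-valued $\mathcal F_T$-measurable process indexed by $\alpha\in A$, not depending on $(\beta,\pi,\varpi)$, with sample paths continuous in $\alpha$, and $T^{-1/2}S_{T\bullet}\Rightarrow S_\bullet$ for a mean-zero $\mathbb R^r$-valued Gaussian process $\{S_\alpha:\alpha\in A\}$ with a.s. continuous sample paths and $E[S_\alpha S_\alpha']=E[s_{t\alpha}s_{t\alpha}']=\mathcal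 I_\alpha$; (iii) $\mathcal I_\alpha$ is a nonrandom symmetric $r\times r$ matrix not depending on $(\beta,\pi,\varpi)$, continuous in $\alpha$, with $0<\inf_{\alpha\in A}\lambda_{\min}(\mathcal I_\alpha)$ and $\sup_{\alpha\in A}\lambda_{\max}(\mathcal I_\alpha)<\infty$; (iv) for every nonrandom sequence of positive scalars $\gamma_T\to0$, $\sup_{(\beta,\pi,\varpi)\in B\times\Pi_\alpha:\|(\beta,\pi,\varpi)-(\beta^*,\pi^*,0)\|\le\gamma_T}|R_T(\alpha,\beta,\pi,\varpi)|/(1+\|T^{1/2}\boldsymbol\theta(\alpha,\beta,\pi,\varpi)\|)^2=o_{p\alpha}(1)$. Assumption 6. $\{\Theta_\alpha,\alpha\in A\}$ is locally uniformly equal to a cone $\Lambda\subset\mathbb R^r$. Assumption 7. With $q_\theta=q_1+q_2$ and $q_\vartheta=r-q_\theta$, $\Lambda=\mathbb R^{q_\theta}\times\Lambda_\vartheta$ for a cone $\Lambda_\vartheta\subset\mathbb R^{q_\vartheta}$. Assumption 8. Partitioning $S_{T\alpha}=(S_{T\theta\alpha},S_{T\vartheta\alpha})$ with $S_{T\theta\alpha}$ of dimension $q_\theta$, $S_{T\theta\alpha}=S^0_T:=\sum_{t=1}^T\nabla f_t(\tilde\phi^* )/f_t(\tilde\phi^* )$ for all $\alpha$. Let $\mathcal I^0=E[(\nabla f_t(\tilde\phi^* )/f_t(\tilde\phi^* ))(\nabla f_t(\tilde\phi^* )/f_t(\tilde\phi^* ))']$. Further notation. $Z_{T\alpha}=\mathcal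 I_\alpha^{-1}T^{-1/2}S_{T\alpha}$, $Z_\alpha=\mathcal I_\alpha^{-1}S_\alpha$. Partition $S_\alpha=(S_{\theta\alpha},S_{\vartheta\alpha})$, $Z_\alpha=(Z_{\theta\alpha},Z_{\vartheta\alpha})$, $\boldsymbol\lambda=(\boldsymbol\lambda_\theta,\boldsymbol\lambda_\vartheta)$ and $\mathcal I_\alpha$ into blocks $\mathcal I_{\theta\theta\alpha},\mathcal I_{\theta\vartheta\alpha},\mathcal I_{\vartheta\theta\alpha},\mathcal I_{\vartheta\vartheta\alpha}$ conformably with dimensions $q_\theta,q_\vartheta$; $(\mathcal I_\alpha^{-1})_{\vartheta\vartheta}$ is the bottom-right $q_\vartheta\times q_\vartheta$ block of $\mathcal I_\alpha^{-1}$. $\Theta_{\alpha,T}=\{T^{1/2}\boldsymbol\theta:\boldsymbol\theta\in\Theta_\alpha\}$. *)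

theory Defs
  imports "HOL-Probability.Probability"
begin

definition cone_pos :: "'v::real_vector set \<Rightarrow> bool" where
  "cone_pos L \<longleftrightarrow> (\<forall>x\<in>L. \<forall>a::real. a > 0 \<longrightarrow> a *\<^sub>R x \<in> L)"

definition loc_unif_equal :: "'a set \<Rightarrow> ('a \<Rightarrow> (real^'r) set) \<Rightarrow> (real^'r) set \<Rightarrow> bool" where
  "loc_unif_equal A Th L \<longleftrightarrow>
     (\<exists>\<delta>>0. \<forall>\<alpha>\<in>A. Th \<alpha> \<inter> {x. \<forall>i. \<bar>x $ i\<bar> < \<delta>} = L \<inter> {x. \<forall>i. \<bar>x $ i\<bar> < \<delta>})"

definition lambda_min :: "real^'r^'r \<Rightarrow> real" where
  "lambda_min Mx = Inf {c. \<exists>v. v \<noteq> 0 \<and> Mx *v v = c *\<^sub>R v}"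

definition lambda_max :: "real^'r^'r \<Rightarrow> real" where
  "lambda_max Mx = Sup {c. \<exists>v. v \<noteq> 0 \<and> Mx *v v = c *\<^sub>R v}"

definition outer_exp :: "'m measure \<Rightarrow> ('m \<Rightarrow> real) \<Rightarrow> real" where
  "outer_exp M f = Inf {integral\<^sup>L M h | h. integrable M h \<and> (AE \<omega> in M. f \<omega> \<le> h \<omega>)}"

definition path_dist :: "'a set \<Rightarrow> ('a \<Rightarrow> 'b::real_normed_vector) \<Rightarrow> ('a \<Rightarrow> 'b) \<Rightarrow> real" where
  "path_dist A f g = (SUP \<alpha>\<in>A. norm (f \<alpha> - g \<alpha>))"

text \<open>Weak convergence (Hoffmann-Jorgensen sense) of processes with continuous sample paths on A,
  in the uniform metric: outer expectations of bounded continuous functionals converge.\<close>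
definition weak_conv_proc ::
  "'m measure \<Rightarrow> 'n measure \<Rightarrow> 'a::topological_space set \<Rightarrow> (nat \<Rightarrow> 'a \<Rightarrow> 'm \<Rightarrow> 'b::real_normed_vector)
     \<Rightarrow> ('a \<Rightarrow> 'n \<Rightarrow> 'b) \<Rightarrow> bool" where
  "weak_conv_proc M N A X Y \<longleftrightarrow>
     (\<forall>g :: ('a \<Rightarrow> 'b) \<Rightarrow> real.
        ((\<exists>B. \<forall>f. continuous_on A f \<longrightarrow> \<bar>g f\<bar> \<le> B) \<and>
         (\<forall>f. continuous_on A f \<longrightarrow> (\<forall>\<epsilon>>0. \<exists>\<delta>>0. \<forall>h. continuous_on A h \<longrightarrow>
               path_dist A f h < \<delta> \<longrightarrow> \<bar>g f - g h\<bar> < \<epsilon>)))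
        \<longrightarrow> (\<lambda>T. outer_exp M (\<lambda>\<omega>. g (\<lambda>\<alpha>. X T \<alpha> \<omega>))) \<longlonglongrightarrow> outer_exp N (\<lambda>\<omega>. g (\<lambda>\<alpha>. Y \<alpha> \<omega>)))"

definition gaussian_rv :: "'n measure \<Rightarrow> ('n \<Rightarrow> real) \<Rightarrow> bool" where
  "gaussian_rv N X \<longleftrightarrow>
     (X \<in> borel_measurable N \<and> (\<exists>\<mu>. AE \<omega> in N. X \<omega> = \<mu>)) \<or>
     (\<exists>\<mu> \<sigma>. \<sigma> > 0 \<and> distributed N lborel X (normal_density \<mu> \<sigma>))"

definition gaussian_proc :: "'n measure \<Rightarrow> 'a set \<Rightarrow> ('a \<Rightarrow> 'n \<Rightarrow> real^'r) \<Rightarrow> bool" where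
  "gaussian_proc N A S \<longleftrightarrow>
     (\<forall>F (c :: 'a \<Rightarrow> real^'r). finite F \<longrightarrow> F \<subseteq> A \<longrightarrow> gaussian_rv N (\<lambda>\<omega>. \<Sum>\<alpha>\<in>F. c \<alpha> \<bullet> S \<alpha> \<omega>))"

text \<open>Uniform o_p(1): for every eps, the outer probability of the event that the supremum
  over the index set exceeds eps tends to 0.\<close>
definition uo_p :: "'m measure \<Rightarrow> (nat \<Rightarrow> 'i set) \<Rightarrow> (nat \<Rightarrow> 'i \<Rightarrow> 'm \<Rightarrow> real) \<Rightarrow> bool" where
  "uo_p M I X \<longleftrightarrow>
     (\<forall>\<epsilon>>0. \<exists>E. (\<forall>T. E T \<in> sets M \<and> {\<omega>\<in>space M. \<exists>i\<in>I T. \<epsilon> < \<bar>X T i \<omega>\<bar>} \<subseteq> E T)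
               \<and> (\<lambda>T. measure M (E T)) \<longlonglongrightarrow> 0)"

end

theory Submission
  imports Defs
begin

text \<open>The rescaled scores \<open>X\<^sub>T \<alpha> = S\<^sub>T \<alpha> / \<surd>T\<close> converge weakly to a process with continuous
  paths on the compact set \<open>A\<close>, so \<open>sup\<^sub>\<alpha> \<parallel>X\<^sub>T \<alpha>\<parallel>\<close> is bounded in probability. Hence, with
  probability tending to one, \<open>\<parallel>X\<^sub>T \<alpha>\<parallel> \<le> c \<delta> \<surd>T / 2\<close> for all \<open>\<alpha>\<close>, where \<open>c\<close> bounds the
  eigenvalues of \<open>I \<alpha>\<close> from below and \<open>\<delta>\<close> is the radius of local equality of \<open>\<Theta>\<^sub>\<alpha>\<close> and \<open>\<Lambda>\<close>.
  On that event both infima of the positive definite quadratic form are attained within the cube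
  of half-width \<open>\<delta> \<surd>T\<close>, on which \<open>\<surd>T \<Theta>\<^sub>\<alpha>\<close> and the cone \<open>\<Lambda>\<close> coincide, so the infima are equal.\<close>

lemma inner_symmetric_matrix:
  fixes Im :: "real^'n^'n"
  assumes "transpose Im = Im"
  shows "v \<bullet> (Im *v w) = (Im *v v) \<bullet> w"
  by (metis assms dot_lmul_matrix vector_transpose_matrix)

text \<open>With \<open>w = Im v - m v\<close>, the nonnegative function
  \<open>t \<mapsto> (v + t w) \<bullet> Im (v + t w) - m \<parallel>v + t w\<parallel>\<^sup>2 = 2 t \<parallel>w\<parallel>\<^sup>2 + t\<^sup>2 b\<close> vanishes at \<open>t = 0\<close>,
  which forces \<open>w = 0\<close>.\<close>
lemma symmetric_matrix_Rayleigh_minimiser_eigenvector: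
  fixes Im :: "real^'n^'n"
  assumes sym: "transpose Im = Im"
    and min: "\<And>y. m * (norm y)\<^sup>2 \<le> y \<bullet> (Im *v y)"
    and v: "norm v = 1" "v \<bullet> (Im *v v) = m"
  shows "Im *v v = m *\<^sub>R v"
proof -
  define w where "w = Im *v v - m *\<^sub>R v"
  define b where "b = w \<bullet> (Im *v w) - m * (norm w)\<^sup>2"
  have b: "0 \<le> b" using min[of w] by (simp add: b_def)
  have vv: "v \<bullet> v = 1" using v(1) by (simp add: norm_eq_sqrt_inner)
  have expand: "(v + t *\<^sub>R w) \<bullet> (Im *v (v + t *\<^sub>R w)) - m * (norm (v + t *\<^sub>R w))\<^sup>2
      = 2 * t * (norm w)\<^sup>2 + t\<^sup>2 * b" for t
  proof -
    have "v \<bullet> (Im *v w) = (Im *v v) \<bullet> w" by (rule inner_symmetric_matrix[OF sym])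
    moreover have "w \<bullet> (Im *v v) = (norm w)\<^sup>2 + m * (v \<bullet> w)"
      by (simp add: power2_norm_eq_inner w_def inner_diff_left inner_commute)
    ultimately show ?thesis
      unfolding power2_norm_eq_inner b_def v(2)[symmetric]
      by (simp add: matrix_vector_right_distrib matrix_vector_mult_scaleR inner_add_left
          inner_add_right vv inner_commute algebra_simps power2_eq_square)
  qed
  have "w = 0"
  proof (rule ccontr)
    assume "w \<noteq> 0"
    hence w: "(norm w)\<^sup>2 > 0" by simp
    define t where "t = - (norm w)\<^sup>2 / (b + 1)"
    have t: "t < 0" using w b by (simp add: t_def)
    have "t * (t * b) < t * (- (norm w)\<^sup>2)"
      using w b t by (intro mult_strict_left_mono_neg) (simp_all add: t_def field_simps)
    moreover have "t * (norm w)\<^sup>2 < 0" using t w by (simp add: mult_neg_pos)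
    ultimately have "2 * t * (norm w)\<^sup>2 + t\<^sup>2 * b < 0" by (simp add: power2_eq_square algebra_simps)
    with expand[of t] min[of "v + t *\<^sub>R w"] show False by linarith
  qed
  thus ?thesis by (simp add: w_def)
qed

lemma lambda_min_le_quadratic_form:
  fixes Im :: "real^'n^'n"
  assumes sym: "transpose Im = Im"
  shows "lambda_min Im * (norm x)\<^sup>2 \<le> x \<bullet> (Im *v x)"
proof -
  define q where "q y = y \<bullet> (Im *v y)" for y :: "real^'n"
  have "continuous_on (sphere 0 1) q" unfolding q_def
    by (intro continuous_intros linear_continuous_on matrix_vector_mul_bounded_linear)
  then obtain v where v: "v \<in> sphere 0 1" and v_min: "\<And>y. y \<in> sphere 0 1 \<Longrightarrow> q v \<le> q y"
    using continuous_attains_inf[OF compact_sphere, of 0 1 q] by auto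
  have m_le: "q v * (norm y)\<^sup>2 \<le> q y" for y
  proof (cases "y = 0")
    case False
    hence "q v \<le> q ((1 / norm y) *\<^sub>R y)" by (intro v_min) simp
    also have "\<dots> = q y / (norm y)\<^sup>2" by (simp add: q_def matrix_vector_mult_scaleR power2_eq_square)
    finally show ?thesis using False by (simp add: field_simps)
  qed (simp add: q_def)
  have "Im *v v = q v *\<^sub>R v"
    using v m_le by (intro symmetric_matrix_Rayleigh_minimiser_eigenvector[OF sym]) (auto simp: q_def)
  moreover have "v \<noteq> 0" using v by auto
  ultimately have eigenvalue: "q v \<in> {c. \<exists>u. u \<noteq> 0 \<and> Im *v u = c *\<^sub>R u}" by blast
  have "bdd_below {c. \<exists>u. u \<noteq> 0 \<and> Im *v u = c *\<^sub>R u}"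
  proof (rule bdd_belowI[of _ "q v"], clarify)
    fix c and u :: "real^'n" assume u: "u \<noteq> 0" "Im *v u = c *\<^sub>R u"
    hence "q v * (norm u)\<^sup>2 \<le> c * (norm u)\<^sup>2"
      using m_le[of u] by (simp add: q_def power2_norm_eq_inner)
    thus "q v \<le> c" using u by simp
  qed
  hence "lambda_min Im \<le> q v" unfolding lambda_min_def using eigenvalue by (intro cInf_lower)
  hence "lambda_min Im * (norm x)\<^sup>2 \<le> q v * (norm x)\<^sup>2" by (simp add: mult_right_mono)
  also have "\<dots> \<le> q x" by (rule m_le)
  finally show ?thesis by (simp add: q_def)
qed

lemma matrix_mul_matrix_inv_pos_def:
  fixes Im :: "real^'n^'n"
  assumes c: "c > 0" and pd: "\<And>x. c * (norm x)\<^sup>2 \<le> x \<bullet> (Im *v x)"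
  shows "Im ** matrix_inv Im = mat 1"
proof -
  have "inj ((*v) Im)"
  proof (rule injI)
    fix x y assume "Im *v x = Im *v y"
    hence "c * (norm (x - y))\<^sup>2 \<le> 0" using pd[of "x - y"] by (simp add: matrix_vector_mult_diff_distrib)
    thus "x = y" using c by (simp add: mult_le_0_iff)
  qed
  then obtain B where B: "B ** Im = mat 1" using matrix_left_invertible_injective by blast
  hence "\<exists>B. Im ** B = mat 1 \<and> B ** Im = mat 1" using matrix_left_right_inverse by blast
  thus ?thesis unfolding matrix_inv_def by (rule someI_ex[THEN conjunct1])
qed

lemma pos_def_form_ge_at_origin:
  fixes Im :: "real^'n^'n"
  assumes c: "c > 0" and pd: "\<And>x. c * (norm x)\<^sup>2 \<le> x \<bullet> (Im *v x)"
    and Z: "Im *v Z = X" and l: "2 * norm X / c \<le> norm l"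
  shows "(0 - Z) \<bullet> (Im *v (0 - Z)) \<le> (l - Z) \<bullet> (Im *v (l - Z))"
proof -
  have ZX: "Z \<bullet> X \<le> norm Z * norm X" by (rule norm_cauchy_schwarz)
  have nZ: "norm Z \<le> norm X / c"
  proof (cases "Z = 0")
    case False
    have "c * (norm Z)\<^sup>2 \<le> Z \<bullet> X" using pd[of Z] Z by simp
    hence "c * norm Z * norm Z \<le> norm X * norm Z" using ZX by (simp add: power2_eq_square algebra_simps)
    hence "c * norm Z \<le> norm X" using False by simp
    thus ?thesis using c by (simp add: field_simps)
  qed (use c in simp)
  have "(0 - Z) \<bullet> (Im *v (0 - Z)) = Z \<bullet> X"
    using Z matrix_vector_mult_diff_distrib[of Im 0 Z] by simp
  also have "\<dots> \<le> norm X / c * norm X"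
    using ZX nZ by (meson mult_right_mono norm_ge_zero order_trans)
  also have "\<dots> = c * (norm X / c)\<^sup>2" using c by (simp add: power2_eq_square)
  also have "\<dots> \<le> c * (norm (l - Z))\<^sup>2"
  proof -
    have "2 * norm X / c = 2 * (norm X / c)" by simp
    hence "norm X / c \<le> norm (l - Z)" using norm_triangle_ineq2[of l Z] nZ l by linarith
    thus ?thesis using c by (intro mult_left_mono power_mono) auto
  qed
  also have "\<dots> \<le> (l - Z) \<bullet> (Im *v (l - Z))" by (rule pd)
  finally show ?thesis .
qed

lemma Inf_image_Int_eq:
  fixes Q :: "'x \<Rightarrow> 'b::conditionally_complete_linorder"
  assumes z: "z \<in> S \<inter> B" and bdd: "bdd_below (Q ` S)" and far: "\<And>l. l \<in> S - B \<Longrightarrow> Q z \<le> Q l"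
  shows "Inf (Q ` S) = Inf (Q ` (S \<inter> B))"
proof (rule antisym)
  have bdd': "bdd_below (Q ` (S \<inter> B))" using bdd by (rule bdd_below_mono) auto
  show "Inf (Q ` S) \<le> Inf (Q ` (S \<inter> B))"
    using z bdd by (intro cInf_superset_mono) auto
  show "Inf (Q ` (S \<inter> B)) \<le> Inf (Q ` S)"
  proof (rule cInf_greatest)
    fix y assume "y \<in> Q ` S"
    then obtain l where l: "l \<in> S" "y = Q l" by auto
    show "Inf (Q ` (S \<inter> B)) \<le> y"
    proof (cases "l \<in> B")
      case False
      have "Inf (Q ` (S \<inter> B)) \<le> Q z" using z bdd' by (intro cInf_lower) auto
      also have "\<dots> \<le> Q l" using far l False by auto
      finally show ?thesis using l by simp
    qed (use l bdd' in \<open>auto intro: cInf_lower\<close>)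
  qed (use z in auto)
qed

definition open_cube :: "real \<Rightarrow> (real^'n) set" where
  "open_cube r = {x. \<forall>i. \<bar>x $ i\<bar> < r}"

lemma scaleR_mem_open_cube_iff: "t > 0 \<Longrightarrow> t *\<^sub>R x \<in> open_cube (r * t) \<longleftrightarrow> x \<in> open_cube r"
  by (simp add: open_cube_def abs_mult)

lemma cone_pos_scaleR_iff: "cone_pos L \<Longrightarrow> t > 0 \<Longrightarrow> t *\<^sub>R x \<in> L \<longleftrightarrow> x \<in> L"
  unfolding cone_pos_def
  by (metis (no_types, lifting) inverse_positive_iff_positive scaleR_scaleR left_inverse
      less_irrefl scaleR_one)

lemma scaleR_image_Int_open_cube_cone:
  assumes cone: "cone_pos L" and t: "t > 0" and eq: "Th \<inter> open_cube r = L \<inter> open_cube r"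
  shows "(\<lambda>x. t *\<^sub>R x) ` Th \<inter> open_cube (r * t) = L \<inter> open_cube (r * t)"
proof -
  have "(\<lambda>x. t *\<^sub>R x) ` Th \<inter> open_cube (r * t) = (\<lambda>x. t *\<^sub>R x) ` (Th \<inter> open_cube r)"
    using t scaleR_mem_open_cube_iff by auto
  also have "\<dots> = (\<lambda>x. t *\<^sub>R x) ` (L \<inter> open_cube r)" by (simp only: eq)
  also have "\<dots> = L \<inter> open_cube (r * t)"
  proof (intro equalityI subsetI)
    fix l assume "l \<in> L \<inter> open_cube (r * t)"
    moreover have "l = t *\<^sub>R ((1 / t) *\<^sub>R l)" using t by simp
    ultimately show "l \<in> (\<lambda>x. t *\<^sub>R x) ` (L \<inter> open_cube r)"
      using cone_pos_scaleR_iff[OF cone t] scaleR_mem_open_cube_iff[OF t] by (metis IntD1 IntD2 IntI image_eqI)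
  qed (use cone_pos_scaleR_iff[OF cone t] scaleR_mem_open_cube_iff[OF t] in auto)
  finally show ?thesis .
qed

text \<open>For \<open>\<parallel>X\<parallel> \<le> c \<delta> t / 2\<close> the minimisers of both infima lie inside \<open>open_cube (\<delta> t)\<close>,
  where the scaled parameter set and the cone coincide.\<close>
lemma Inf_pos_def_form_scaled_eq_cone:
  fixes Im :: "real^'n^'n"
  assumes c: "c > 0" and pd: "\<And>x. c * (norm x)\<^sup>2 \<le> x \<bullet> (Im *v x)"
    and cone: "cone_pos L" and Th0: "0 \<in> Th" and \<delta>: "\<delta> > 0"
    and eq: "Th \<inter> open_cube \<delta> = L \<inter> open_cube \<delta>"
    and t: "t > 0" and X: "norm X \<le> c * \<delta> * t / 2"
    and Z: "Z = matrix_inv Im *v X"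
  shows "Inf {(l - Z) \<bullet> (Im *v (l - Z)) | l. l \<in> (\<lambda>x. t *\<^sub>R x) ` Th}
       = Inf {(l - Z) \<bullet> (Im *v (l - Z)) | l. l \<in> L}"
proof -
  define Q where "Q l = (l - Z) \<bullet> (Im *v (l - Z))" for l
  define S where "S = (\<lambda>x. t *\<^sub>R x) ` Th"
  have IZ: "Im *v Z = X"
    unfolding Z matrix_vector_mul_assoc matrix_mul_matrix_inv_pos_def[OF c pd] by simp
  have "0 \<le> Q l" for l
    using pd[of "l - Z"] c unfolding Q_def by (meson order_trans mult_nonneg_nonneg less_imp_le zero_le_power2)
  hence bdd: "bdd_below (Q ` U)" for U by (intro bdd_belowI[of _ 0]) auto
  have far: "Q 0 \<le> Q l" if l: "l \<notin> open_cube (\<delta> * t)" for l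
  proof -
    obtain i where "\<delta> * t \<le> \<bar>l $ i\<bar>" using l by (auto simp: open_cube_def not_less)
    moreover have "2 * norm X / c \<le> \<delta> * t" using X c by (simp add: field_simps)
    ultimately have "2 * norm X / c \<le> norm l" using component_le_norm_cart[of l i] by linarith
    thus ?thesis unfolding Q_def by (rule pos_def_form_ge_at_origin[OF c pd IZ])
  qed
  have S_eq: "S \<inter> open_cube (\<delta> * t) = L \<inter> open_cube (\<delta> * t)"
    unfolding S_def by (rule scaleR_image_Int_open_cube_cone[OF cone t eq])
  have zero: "0 \<in> S \<inter> open_cube (\<delta> * t)" using Th0 \<delta> t unfolding S_def open_cube_def by force
  have "Inf (Q ` S) = Inf (Q ` (S \<inter> open_cube (\<delta> * t)))"
    using zero bdd far by (intro Inf_image_Int_eq) auto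
  also have "\<dots> = Inf (Q ` L)"
    unfolding S_eq using zero bdd far by (intro Inf_image_Int_eq[symmetric]) (auto simp: S_eq)
  finally show ?thesis unfolding Q_def S_def by (simp add: setcompr_eq_image)
qed

lemma norm_le_path_dist_zero:
  fixes f :: "'a::metric_space \<Rightarrow> 'b::real_normed_vector"
  assumes "compact A" "continuous_on A f" "\<alpha> \<in> A"
  shows "norm (f \<alpha>) \<le> path_dist A f (\<lambda>_. 0)"
proof -
  have "bounded (f ` A)" using compact_continuous_image[OF assms(2,1)] by (rule compact_imp_bounded)
  then obtain a where "\<forall>x\<in>f ` A. norm x \<le> a" unfolding bounded_iff by blast
  hence "bdd_above ((\<lambda>\<alpha>. norm (f \<alpha>)) ` A)" by (intro bdd_aboveI[of _ a]) auto
  thus ?thesis unfolding path_dist_def using assms(3) by (auto intro: cSUP_upper2)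
qed

lemma path_dist_zero_le:
  fixes f :: "'a \<Rightarrow> 'b::real_normed_vector"
  assumes "A \<noteq> {}" "\<And>\<alpha>. \<alpha> \<in> A \<Longrightarrow> norm (f \<alpha>) \<le> K"
  shows "path_dist A f (\<lambda>_. 0) \<le> K"
  unfolding path_dist_def using assms by (auto intro: cSUP_least)

lemma path_dist_zero_Lipschitz:
  fixes f h :: "'a::metric_space \<Rightarrow> 'b::real_normed_vector"
  assumes A: "compact A" "A \<noteq> {}" and f: "continuous_on A f" and h: "continuous_on A h"
  shows "\<bar>path_dist A f (\<lambda>_. 0) - path_dist A h (\<lambda>_. 0)\<bar> \<le> path_dist A f h"
proof -
  have fh: "norm (f \<alpha> - h \<alpha>) \<le> path_dist A f h" if "\<alpha> \<in> A" for \<alpha>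
    using norm_le_path_dist_zero[OF A(1) continuous_on_diff[OF f h] that] by (simp add: path_dist_def)
  have "path_dist A f (\<lambda>_. 0) \<le> path_dist A h (\<lambda>_. 0) + path_dist A f h"
  proof (rule path_dist_zero_le[OF A(2)])
    fix \<alpha> assume \<alpha>: "\<alpha> \<in> A"
    have "norm (f \<alpha>) \<le> norm (h \<alpha>) + norm (f \<alpha> - h \<alpha>)" by (rule norm_triangle_sub)
    thus "norm (f \<alpha>) \<le> path_dist A h (\<lambda>_. 0) + path_dist A f h"
      using norm_le_path_dist_zero[OF A(1) h \<alpha>] fh[OF \<alpha>] by linarith
  qed
  moreover have "path_dist A h (\<lambda>_. 0) \<le> path_dist A f (\<lambda>_. 0) + path_dist A f h"
  proof (rule path_dist_zero_le[OF A(2)])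
    fix \<alpha> assume \<alpha>: "\<alpha> \<in> A"
    have "norm (h \<alpha>) \<le> norm (f \<alpha>) + norm (f \<alpha> - h \<alpha>)"
      by (metis norm_triangle_sub norm_minus_commute)
    thus "norm (h \<alpha>) \<le> path_dist A f (\<lambda>_. 0) + path_dist A f h"
      using norm_le_path_dist_zero[OF A(1) f \<alpha>] fh[OF \<alpha>] by linarith
  qed
  ultimately show ?thesis by linarith
qed

lemma norm_le_on_dense_imp_norm_le:
  fixes f :: "'a::metric_space \<Rightarrow> 'b::real_normed_vector"
  assumes D: "A \<subseteq> closure D" "D \<subseteq> A" and f: "continuous_on A f"
    and le: "\<And>\<beta>. \<beta> \<in> D \<Longrightarrow> norm (f \<beta>) \<le> r" and \<alpha>: "\<alpha> \<in> A"
  shows "norm (f \<alpha>) \<le> r"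
proof (rule ccontr)
  assume "\<not> norm (f \<alpha>) \<le> r"
  hence e: "norm (f \<alpha>) - r > 0" by simp
  then obtain d where d: "d > 0" "\<And>x. x \<in> A \<Longrightarrow> dist x \<alpha> < d \<Longrightarrow> dist (f x) (f \<alpha>) < norm (f \<alpha>) - r"
    using f \<alpha> unfolding continuous_on_iff by blast
  have "\<alpha> \<in> closure D" using D(1) \<alpha> by blast
  then obtain \<beta> where \<beta>: "\<beta> \<in> D" "dist \<beta> \<alpha> < d"
    using d(1) unfolding closure_approachable by blast
  hence "dist (f \<beta>) (f \<alpha>) < norm (f \<alpha>) - r" using d(2) D(2) by blast
  hence "r < norm (f \<beta>)" using norm_triangle_ineq2[of "f \<alpha>" "f \<beta>"] by (simp add: dist_norm norm_minus_commute)
  thus False using le[OF \<beta>(1)] by simp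
qed

lemma measure_le_outer_exp:
  assumes "prob_space M" and E: "E \<in> sets M"
    and G: "\<And>\<omega>. \<omega> \<in> space M \<Longrightarrow> 0 \<le> G \<omega> \<and> G \<omega> \<le> 1" and G_E: "\<And>\<omega>. \<omega> \<in> E \<Longrightarrow> 1 \<le> G \<omega>"
  shows "measure M E \<le> outer_exp M G"
  unfolding outer_exp_def
proof (rule cInf_greatest)
  interpret prob_space M by fact
  show "{integral\<^sup>L M h | h. integrable M h \<and> (AE \<omega> in M. G \<omega> \<le> h \<omega>)} \<noteq> {}"
    using G by (auto intro!: exI[of _ "\<lambda>_. 1"])
  fix y assume "y \<in> {integral\<^sup>L M h | h. integrable M h \<and> (AE \<omega> in M. G \<omega> \<le> h \<omega>)}"
  then obtain h where h: "y = integral\<^sup>L M h" "integrable M h" "AE \<omega> in M. G \<omega> \<le> h \<omega>" by blast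
  have "AE \<omega> in M. indicator E \<omega> \<le> h \<omega>"
    using h(3) AE_space
  proof eventually_elim
    case (elim \<omega>)
    show ?case using elim G[OF elim(2)] G_E[of \<omega>] by (cases "\<omega> \<in> E") auto
  qed
  moreover have "integrable M (indicator E :: _ \<Rightarrow> real)"
    using E by (intro integrable_real_indicator) (auto simp: less_top[symmetric])
  ultimately have "integral\<^sup>L M (indicator E) \<le> integral\<^sup>L M h"
    using h(2) by (intro integral_mono_AE)
  thus "measure M E \<le> y" using E h(1) by simp
qed

lemma outer_exp_le_measure:
  assumes "prob_space N" and F: "F \<in> sets N"
    and G: "\<And>\<omega>. \<omega> \<in> space N \<Longrightarrow> 0 \<le> G \<omega>" and G_F: "AE \<omega> in N. G \<omega> \<le> indicator F \<omega>"
  shows "outer_exp N G \<le> measure N F"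
  unfolding outer_exp_def
proof (rule cInf_lower)
  interpret prob_space N by fact
  show "measure N F \<in> {integral\<^sup>L N h | h. integrable N h \<and> (AE \<omega> in N. G \<omega> \<le> h \<omega>)}"
  proof -
    have "integrable N (indicator F :: _ \<Rightarrow> real)"
      using F by (intro integrable_real_indicator) (auto simp: less_top[symmetric])
    moreover have "measure N F = integral\<^sup>L N (indicator F)" using F by simp
    ultimately show ?thesis using G_F by blast
  qed
  show "bdd_below {integral\<^sup>L N h | h. integrable N h \<and> (AE \<omega> in N. G \<omega> \<le> h \<omega>)}"
  proof (rule bdd_belowI[of _ 0], clarify)
    fix h assume "integrable N h" "AE \<omega> in N. G \<omega> \<le> h \<omega>"
    moreover from this(2) have "AE \<omega> in N. 0 \<le> h \<omega>"
      using AE_space by eventually_elim (use G in \<open>auto intro: order_trans\<close>)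
    ultimately show "0 \<le> integral\<^sup>L N h" by (intro integral_nonneg_AE)
  qed
qed

lemma sets_Collect_norm_gt_countable:
  fixes F :: "'i \<Rightarrow> 'x \<Rightarrow> 'b::real_normed_vector"
  assumes "countable D" "\<And>\<alpha>. \<alpha> \<in> D \<Longrightarrow> F \<alpha> \<in> borel_measurable M"
  shows "{\<omega>\<in>space M. \<exists>\<alpha>\<in>D. r < norm (F \<alpha> \<omega>)} \<in> sets M"
proof -
  have "{\<omega>\<in>space M. \<exists>\<alpha>\<in>D. r < norm (F \<alpha> \<omega>)} = (\<Union>\<alpha>\<in>D. {\<omega>\<in>space M. r < norm (F \<alpha> \<omega>)})" by auto
  also have "\<dots> \<in> sets M" using assms by (intro sets.countable_UN'') measurable
  finally show ?thesis .
qed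

definition bounded_continuous_functional ::
    "'a::topological_space set \<Rightarrow> (('a \<Rightarrow> 'b::real_normed_vector) \<Rightarrow> real) \<Rightarrow> bool" where
  "bounded_continuous_functional A g \<longleftrightarrow>
     (\<exists>B. \<forall>f. continuous_on A f \<longrightarrow> \<bar>g f\<bar> \<le> B) \<and>
     (\<forall>f. continuous_on A f \<longrightarrow> (\<forall>\<epsilon>>0. \<exists>\<delta>>0. \<forall>h. continuous_on A h \<longrightarrow>
         path_dist A f h < \<delta> \<longrightarrow> \<bar>g f - g h\<bar> < \<epsilon>))"

lemma weak_conv_procD:
  assumes "weak_conv_proc M N A X Y" "bounded_continuous_functional A g"
  shows "(\<lambda>T. outer_exp M (\<lambda>\<omega>. g (\<lambda>\<alpha>. X T \<alpha> \<omega>))) \<longlonglongrightarrow> outer_exp N (\<lambda>\<omega>. g (\<lambda>\<alpha>. Y \<alpha> \<omega>))"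
  using assms unfolding weak_conv_proc_def bounded_continuous_functional_def by blast

text \<open>A continuous substitute for the indicator of \<open>sup\<^sub>A \<parallel>f\<parallel> > K\<close>.\<close>
definition sup_norm_cutoff :: "'a set \<Rightarrow> real \<Rightarrow> ('a \<Rightarrow> 'b::real_normed_vector) \<Rightarrow> real" where
  "sup_norm_cutoff A K f = min 1 (max 0 (path_dist A f (\<lambda>_. 0) - K))"

lemma sup_norm_cutoff_bounds: "0 \<le> sup_norm_cutoff A K f" "sup_norm_cutoff A K f \<le> 1"
  by (simp_all add: sup_norm_cutoff_def)

lemma sup_norm_cutoff_eq_0:
  "A \<noteq> {} \<Longrightarrow> (\<And>\<alpha>. \<alpha> \<in> A \<Longrightarrow> norm (f \<alpha>) \<le> K) \<Longrightarrow> sup_norm_cutoff A K f = 0"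
  using path_dist_zero_le[of A f K] by (simp add: sup_norm_cutoff_def)

lemma sup_norm_cutoff_eq_1:
  fixes f :: "'a::metric_space \<Rightarrow> 'b::real_normed_vector"
  shows "compact A \<Longrightarrow> continuous_on A f \<Longrightarrow> \<alpha> \<in> A \<Longrightarrow> K + 1 < norm (f \<alpha>) \<Longrightarrow> sup_norm_cutoff A K f = 1"
  using norm_le_path_dist_zero[of A f \<alpha>] by (simp add: sup_norm_cutoff_def)

lemma bounded_continuous_functional_sup_norm_cutoff:
  fixes A :: "'a::metric_space set"
  assumes "compact A" "A \<noteq> {}"
  shows "bounded_continuous_functional A (sup_norm_cutoff A K :: ('a \<Rightarrow> 'b::real_normed_vector) \<Rightarrow> real)"
  unfolding bounded_continuous_functional_def
proof (intro conjI allI impI)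
  show "\<exists>B. \<forall>f. continuous_on A f \<longrightarrow> \<bar>sup_norm_cutoff A K f\<bar> \<le> B"
    by (intro exI[of _ 1] allI impI) (simp add: sup_norm_cutoff_bounds abs_of_nonneg)
  fix f h :: "'a \<Rightarrow> 'b" and \<epsilon> :: real
  assume "continuous_on A f" "\<epsilon> > 0"
  show "\<exists>\<delta>>0. \<forall>h. continuous_on A h \<longrightarrow> path_dist A f h < \<delta> \<longrightarrow>
          \<bar>sup_norm_cutoff A K f - sup_norm_cutoff A K h\<bar> < \<epsilon>"
  proof (intro exI[of _ \<epsilon>] conjI allI impI)
    fix h assume "continuous_on A h" "path_dist A f h < \<epsilon>"
    moreover have "\<bar>min 1 (max 0 (a - K)) - min 1 (max 0 (b - K))\<bar> \<le> \<bar>a - b\<bar>" for a b :: real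
      by (simp add: min_def max_def abs_if)
    ultimately show "\<bar>sup_norm_cutoff A K f - sup_norm_cutoff A K h\<bar> < \<epsilon>"
      using path_dist_zero_Lipschitz[OF assms \<open>continuous_on A f\<close>, of h]
      unfolding sup_norm_cutoff_def by (meson order_le_less_trans)
  qed fact
qed

lemma tendsto_measure_norm_gt_zero:
  fixes Y :: "'a::metric_space \<Rightarrow> 'n \<Rightarrow> 'b::real_normed_vector"
  assumes "prob_space N" "compact A" "D \<subseteq> A" "countable D"
    and Y_meas: "\<And>\<alpha>. \<alpha> \<in> D \<Longrightarrow> Y \<alpha> \<in> borel_measurable N"
    and Y_cont: "AE \<omega> in N. continuous_on A (\<lambda>\<alpha>. Y \<alpha> \<omega>)"
  shows "(\<lambda>K::nat. measure N {\<omega>\<in>space N. \<exists>\<alpha>\<in>D. real K < norm (Y \<alpha> \<omega>)}) \<longlonglongrightarrow> 0"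
proof -
  interpret prob_space N by fact
  define G where "G K = {\<omega>\<in>space N. \<exists>\<alpha>\<in>D. real K < norm (Y \<alpha> \<omega>)}" for K :: nat
  have G_sets: "G K \<in> sets N" for K
    unfolding G_def using assms(4) Y_meas by (rule sets_Collect_norm_gt_countable)
  have G_dec: "decseq G"
    unfolding decseq_def G_def by (auto, meson le_less_trans of_nat_le_iff)
  have "AE \<omega> in N. \<omega> \<notin> (\<Inter>K. G K)"
    using Y_cont
  proof eventually_elim
    case (elim \<omega>)
    have "bounded ((\<lambda>\<alpha>. Y \<alpha> \<omega>) ` A)"
      using compact_continuous_image[OF elim assms(2)] by (rule compact_imp_bounded)
    then obtain a where "\<forall>\<alpha>\<in>A. norm (Y \<alpha> \<omega>) \<le> a" unfolding bounded_iff by blast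
    moreover obtain K :: nat where "a < real K" using reals_Archimedean2 by blast
    ultimately have "\<omega> \<notin> G K" using assms(3) unfolding G_def by force
    thus ?case by blast
  qed
  moreover have "(\<Inter>K. G K) \<in> sets N" using G_sets by blast
  ultimately have "emeasure N (\<Inter>K. G K) = 0"
    using AE_iff_measurable[of "\<Inter>K. G K" N "\<lambda>\<omega>. \<omega> \<notin> (\<Inter>K. G K)"] sets.sets_into_space by blast
  hence "measure N (\<Inter>K. G K) = 0" by (simp add: measure_def)
  thus ?thesis using finite_Lim_measure_decseq[OF _ G_dec] G_sets unfolding G_def by auto
qed

lemma outer_exp_sup_norm_cutoff_le_measure:
  fixes Y :: "'a::metric_space \<Rightarrow> 'n \<Rightarrow> 'b::real_normed_vector"
  assumes "prob_space N" "A \<noteq> {}" "A \<subseteq> closure D" "D \<subseteq> A" "countable D"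
    and Y_meas: "\<And>\<alpha>. \<alpha> \<in> D \<Longrightarrow> Y \<alpha> \<in> borel_measurable N"
    and Y_cont: "AE \<omega> in N. continuous_on A (\<lambda>\<alpha>. Y \<alpha> \<omega>)"
  shows "outer_exp N (\<lambda>\<omega>. sup_norm_cutoff A K (\<lambda>\<alpha>. Y \<alpha> \<omega>))
           \<le> measure N {\<omega>\<in>space N. \<exists>\<alpha>\<in>D. K < norm (Y \<alpha> \<omega>)}"
proof (rule outer_exp_le_measure[OF assms(1)])
  show "{\<omega>\<in>space N. \<exists>\<alpha>\<in>D. K < norm (Y \<alpha> \<omega>)} \<in> sets N"
    using assms(5) Y_meas by (rule sets_Collect_norm_gt_countable)
  show "AE \<omega> in N. sup_norm_cutoff A K (\<lambda>\<alpha>. Y \<alpha> \<omega>)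
          \<le> indicator {\<omega>\<in>space N. \<exists>\<alpha>\<in>D. K < norm (Y \<alpha> \<omega>)} \<omega>"
    using Y_cont AE_space
  proof eventually_elim
    case (elim \<omega>)
    show ?case
    proof (cases "\<exists>\<alpha>\<in>D. K < norm (Y \<alpha> \<omega>)")
      case False
      hence "norm (Y \<alpha> \<omega>) \<le> K" if "\<alpha> \<in> A" for \<alpha>
        using norm_le_on_dense_imp_norm_le[OF assms(3,4) elim(1) _ that] by (meson not_le)
      hence "sup_norm_cutoff A K (\<lambda>\<alpha>. Y \<alpha> \<omega>) = 0" by (rule sup_norm_cutoff_eq_0[OF assms(2)])
      thus ?thesis by simp
    qed (use elim sup_norm_cutoff_bounds in simp)
  qed
qed (rule sup_norm_cutoff_bounds)

lemma measure_norm_gt_le_outer_exp_sup_norm_cutoff: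
  fixes X :: "'a::metric_space \<Rightarrow> 'm \<Rightarrow> 'b::real_normed_vector"
  assumes "prob_space M" "compact A" "D \<subseteq> A" "countable D"
    and X_meas: "\<And>\<alpha>. \<alpha> \<in> D \<Longrightarrow> X \<alpha> \<in> borel_measurable M"
    and X_cont: "\<And>\<omega>. \<omega> \<in> space M \<Longrightarrow> continuous_on A (\<lambda>\<alpha>. X \<alpha> \<omega>)"
  shows "measure M {\<omega>\<in>space M. \<exists>\<alpha>\<in>D. K + 1 < norm (X \<alpha> \<omega>)}
           \<le> outer_exp M (\<lambda>\<omega>. sup_norm_cutoff A K (\<lambda>\<alpha>. X \<alpha> \<omega>))"
proof (rule measure_le_outer_exp[OF assms(1)])
  show "{\<omega>\<in>space M. \<exists>\<alpha>\<in>D. K + 1 < norm (X \<alpha> \<omega>)} \<in> sets M"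
    using assms(4) X_meas by (rule sets_Collect_norm_gt_countable)
  show "1 \<le> sup_norm_cutoff A K (\<lambda>\<alpha>. X \<alpha> \<omega>)"
    if "\<omega> \<in> {\<omega>\<in>space M. \<exists>\<alpha>\<in>D. K + 1 < norm (X \<alpha> \<omega>)}" for \<omega>
    using that assms(3) sup_norm_cutoff_eq_1[OF assms(2) X_cont] by auto
qed (simp add: sup_norm_cutoff_bounds)

text \<open>Choose \<open>K\<close> with the tail of \<open>Y\<close> beyond \<open>K\<close> below \<open>\<eta>\<close>; the cutoff at level \<open>K\<close> transfers this
  bound to \<open>X T\<close> for large \<open>T\<close>, and it dominates the tail of \<open>X T\<close> beyond \<open>K + 1 \<le> r T\<close>.\<close>
lemma tendsto_measure_norm_gt_on_dense_zero:
  fixes A :: "'a::metric_space set"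
    and X :: "nat \<Rightarrow> 'a \<Rightarrow> 'm \<Rightarrow> 'b::real_normed_vector" and Y :: "'a \<Rightarrow> 'n \<Rightarrow> 'b"
  assumes "prob_space M" "prob_space N" "compact A" "A \<noteq> {}"
    and D: "countable D" "D \<subseteq> A" "A \<subseteq> closure D"
    and weak: "weak_conv_proc M N A X Y"
    and X_meas: "\<And>T \<alpha>. \<alpha> \<in> D \<Longrightarrow> X T \<alpha> \<in> borel_measurable M"
    and X_cont: "\<And>T \<omega>. \<omega> \<in> space M \<Longrightarrow> continuous_on A (\<lambda>\<alpha>. X T \<alpha> \<omega>)"
    and Y_meas: "\<And>\<alpha>. \<alpha> \<in> D \<Longrightarrow> Y \<alpha> \<in> borel_measurable N"
    and Y_cont: "AE \<omega> in N. continuous_on A (\<lambda>\<alpha>. Y \<alpha> \<omega>)"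
    and r: "filterlim r at_top sequentially"
  shows "(\<lambda>T. measure M {\<omega>\<in>space M. \<exists>\<alpha>\<in>D. r T < norm (X T \<alpha> \<omega>)}) \<longlonglongrightarrow> 0"
  unfolding tendsto_iff
proof (intro allI impI)
  interpret M: prob_space M by fact
  fix \<eta> :: real assume \<eta>: "\<eta> > 0"
  have "eventually (\<lambda>K. measure N {\<omega>\<in>space N. \<exists>\<alpha>\<in>D. real K < norm (Y \<alpha> \<omega>)} < \<eta>) sequentially"
    using tendsto_measure_norm_gt_zero[OF assms(2,3) D(2,1) Y_meas Y_cont] \<eta> by (rule order_tendstoD(2))
  then obtain K :: nat where K: "measure N {\<omega>\<in>space N. \<exists>\<alpha>\<in>D. real K < norm (Y \<alpha> \<omega>)} < \<eta>"
    by (auto simp: eventually_sequentially)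
  let ?G = "\<lambda>T \<omega>. sup_norm_cutoff A (real K) (\<lambda>\<alpha>. X T \<alpha> \<omega>)"
  have lim: "(\<lambda>T. outer_exp M (?G T)) \<longlonglongrightarrow> outer_exp N (\<lambda>\<omega>. sup_norm_cutoff A (real K) (\<lambda>\<alpha>. Y \<alpha> \<omega>))"
    by (intro weak_conv_procD[OF weak] bounded_continuous_functional_sup_norm_cutoff assms(3,4))
  have "outer_exp N (\<lambda>\<omega>. sup_norm_cutoff A (real K) (\<lambda>\<alpha>. Y \<alpha> \<omega>))
      \<le> measure N {\<omega>\<in>space N. \<exists>\<alpha>\<in>D. real K < norm (Y \<alpha> \<omega>)}"
    by (rule outer_exp_sup_norm_cutoff_le_measure[OF assms(2,4) D(3,2,1) Y_meas Y_cont])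
  hence "eventually (\<lambda>T. outer_exp M (?G T) < \<eta>) sequentially"
    using K by (intro order_tendstoD(2)[OF lim]) simp
  moreover have "eventually (\<lambda>T. real K + 1 \<le> r T) sequentially"
    using r by (simp add: filterlim_at_top)
  ultimately show "eventually (\<lambda>T. dist (measure M {\<omega>\<in>space M. \<exists>\<alpha>\<in>D. r T < norm (X T \<alpha> \<omega>)}) 0 < \<eta>)
      sequentially"
  proof eventually_elim
    case (elim T)
    have "measure M {\<omega>\<in>space M. \<exists>\<alpha>\<in>D. r T < norm (X T \<alpha> \<omega>)}
        \<le> measure M {\<omega>\<in>space M. \<exists>\<alpha>\<in>D. real K + 1 < norm (X T \<alpha> \<omega>)}"
      using elim(2) D X_meas by (intro M.finite_measure_mono sets_Collect_norm_gt_countable) force+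
    also have "\<dots> \<le> outer_exp M (?G T)"
      by (rule measure_norm_gt_le_outer_exp_sup_norm_cutoff[OF assms(1,3) D(2,1) X_meas X_cont])
    finally show ?case using elim(1) by simp
  qed
qed

lemma weak_conv_proc_norm_bounded_in_probability:
  fixes A :: "'a::{metric_space, second_countable_topology} set"
    and X :: "nat \<Rightarrow> 'a \<Rightarrow> 'm \<Rightarrow> 'b::real_normed_vector" and Y :: "'a \<Rightarrow> 'n \<Rightarrow> 'b"
  assumes "prob_space M" "prob_space N" "compact A"
    and weak: "weak_conv_proc M N A X Y"
    and X_meas: "\<And>T \<alpha>. \<alpha> \<in> A \<Longrightarrow> X T \<alpha> \<in> borel_measurable M"
    and X_cont: "\<And>T \<omega>. \<omega> \<in> space M \<Longrightarrow> continuous_on A (\<lambda>\<alpha>. X T \<alpha> \<omega>)"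
    and Y_meas: "\<And>\<alpha>. \<alpha> \<in> A \<Longrightarrow> Y \<alpha> \<in> borel_measurable N"
    and Y_cont: "AE \<omega> in N. continuous_on A (\<lambda>\<alpha>. Y \<alpha> \<omega>)"
    and r: "filterlim r at_top sequentially"
  obtains E where "\<And>T. E T \<in> sets M"
    and "\<And>T. {\<omega>\<in>space M. \<exists>\<alpha>\<in>A. r T < norm (X T \<alpha> \<omega>)} \<subseteq> E T"
    and "(\<lambda>T. measure M (E T)) \<longlonglongrightarrow> 0"
proof (cases "A = {}")
  case True
  thus ?thesis using that[of "\<lambda>_. {}"] by simp
next
  case False
  obtain D where D: "countable D" "D \<subseteq> A" "A \<subseteq> closure D" by (rule separable)
  define E where "E T = {\<omega>\<in>space M. \<exists>\<alpha>\<in>D. r T < norm (X T \<alpha> \<omega>)}" for T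
  have "E T \<in> sets M" for T
    unfolding E_def using D X_meas by (intro sets_Collect_norm_gt_countable) auto
  moreover have "{\<omega>\<in>space M. \<exists>\<alpha>\<in>A. r T < norm (X T \<alpha> \<omega>)} \<subseteq> E T" for T
  proof (rule subsetI, rule ccontr)
    fix \<omega> assume "\<omega> \<in> {\<omega>\<in>space M. \<exists>\<alpha>\<in>A. r T < norm (X T \<alpha> \<omega>)}" "\<omega> \<notin> E T"
    then obtain \<alpha> where \<omega>: "\<omega> \<in> space M" and \<alpha>: "\<alpha> \<in> A" "r T < norm (X T \<alpha> \<omega>)"
      and le: "\<And>\<beta>. \<beta> \<in> D \<Longrightarrow> norm (X T \<beta> \<omega>) \<le> r T"
      unfolding E_def by (auto simp: not_less)
    show False using norm_le_on_dense_imp_norm_le[OF D(3,2) X_cont[OF \<omega>] le \<alpha>(1)] \<alpha>(2) by simp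
  qed
  moreover have "(\<lambda>T. measure M (E T)) \<longlonglongrightarrow> 0"
    unfolding E_def using D X_meas Y_meas
    by (intro tendsto_measure_norm_gt_on_dense_zero[OF assms(1-3) False D weak _ X_cont _ Y_cont r]) auto
  ultimately show ?thesis by (rule that)
qed

lemma uo_pI_eventually_vanishing_outside:
  assumes "\<And>T. E T \<in> sets M" "(\<lambda>T. measure M (E T)) \<longlonglongrightarrow> 0"
    and "eventually (\<lambda>T. \<forall>\<omega>\<in>space M - E T. \<forall>i\<in>I T. X T i \<omega> = 0) sequentially"
  shows "uo_p M I X"
proof -
  obtain n where n: "\<And>T. n \<le> T \<Longrightarrow> \<forall>\<omega>\<in>space M - E T. \<forall>i\<in>I T. X T i \<omega> = 0"
    using assms(3) by (auto simp: eventually_sequentially)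
  define E' where "E' T = (if T < n then space M else E T)" for T
  have "eventually (\<lambda>T. measure M (E T) = measure M (E' T)) sequentially"
    unfolding eventually_sequentially E'_def by (intro exI[of _ n]) simp
  with assms(2) have "(\<lambda>T. measure M (E' T)) \<longlonglongrightarrow> 0" by (rule Lim_transform_eventually)
  moreover have "E' T \<in> sets M" for T using assms(1) by (simp add: E'_def)
  moreover have "X T i \<omega> = 0" if "\<omega> \<in> space M" "\<omega> \<notin> E' T" "i \<in> I T" for T \<omega> i
    using n[of T] that by (cases "T < n") (auto simp: E'_def)
  ultimately show ?thesis unfolding uo_p_def by (intro allI impI exI[of _ E']) force
qed

theorem lemma3:
  fixes M :: "'m measure" and N :: "'n measure"
    and A :: "'a::euclidean_space set"
    and Par :: "'a \<Rightarrow> 'p::euclidean_space set" and pstar :: "'p"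
    and \<theta> :: "'a \<Rightarrow> 'p \<Rightarrow> real^'r"
    and L :: "nat \<Rightarrow> 'a \<Rightarrow> 'p \<Rightarrow> 'm \<Rightarrow> real"
    and R :: "nat \<Rightarrow> 'a \<Rightarrow> 'p \<Rightarrow> 'm \<Rightarrow> real"
    and s :: "nat \<Rightarrow> 'a \<Rightarrow> 'm \<Rightarrow> real^'r"
    and S :: "nat \<Rightarrow> 'a \<Rightarrow> 'm \<Rightarrow> real^'r"
    and Slim :: "'a \<Rightarrow> 'n \<Rightarrow> real^'r"
    and I :: "'a \<Rightarrow> real^'r^'r"
    and \<Lambda> :: "(real^'r) set"
  assumes probM: "prob_space M" and probN: "prob_space N"
    and A_compact: "compact A"
    \<comment> \<open>Assumption 5(i)\<close>
    and pstar_in: "\<forall>\<alpha>\<in>A. pstar \<in> Par \<alpha>"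
    and theta_pstar: "\<forall>\<alpha>\<in>A. \<theta> \<alpha> pstar = 0"
    and theta_ident: "\<forall>\<epsilon>>0. \<exists>\<delta>>0. \<forall>\<alpha>\<in>A. \<forall>p\<in>Par \<alpha>.
                        \<epsilon> \<le> norm (p - pstar) \<longrightarrow> \<delta> \<le> norm (\<theta> \<alpha> p)"
    \<comment> \<open>Quadratic expansion of the (reparameterized) log-likelihood, defining the remainder R\<close>
    and expansion: "\<forall>T. \<forall>\<alpha>\<in>A. \<forall>p\<in>Par \<alpha>. \<forall>\<omega>\<in>space M.
        L T \<alpha> p \<omega> - L T \<alpha> pstar \<omega> =
          ((1 / sqrt (real T)) *\<^sub>R S T \<alpha> \<omega>) \<bullet> (sqrt (real T) *\<^sub>R \<theta> \<alpha> p)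
          - 1/2 * ((sqrt (real T) *\<^sub>R \<theta> \<alpha> p) \<bullet> (I \<alpha> *v (sqrt (real T) *\<^sub>R \<theta> \<alpha> p)))
          + R T \<alpha> p \<omega>"
    \<comment> \<open>Assumption 5(ii)\<close>
    and S_sum: "\<forall>T. \<forall>\<alpha>\<in>A. \<forall>\<omega>\<in>space M. S T \<alpha> \<omega> = (\<Sum>t=1..T. s t \<alpha> \<omega>)"
    and s_meas: "\<forall>t. \<forall>\<alpha>\<in>A. s t \<alpha> \<in> borel_measurable M"
    and s_cov: "\<forall>t\<ge>1. \<forall>\<alpha>\<in>A. \<forall>i j. integrable M (\<lambda>\<omega>. s t \<alpha> \<omega> $ i * s t \<alpha> \<omega> $ j)
                   \<and> integral\<^sup>L M (\<lambda>\<omega>. s t \<alpha> \<omega> $ i * s t \<alpha> \<omega> $ j) = I \<alpha> $ i $ j"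
    and S_cont: "\<forall>T. \<forall>\<omega>\<in>space M. continuous_on A (\<lambda>\<alpha>. S T \<alpha> \<omega>)"
    and S_weak: "weak_conv_proc M N A (\<lambda>T \<alpha> \<omega>. (1 / sqrt (real T)) *\<^sub>R S T \<alpha> \<omega>) Slim"
    and Slim_meas: "\<forall>\<alpha>\<in>A. Slim \<alpha> \<in> borel_measurable N"
    and Slim_gauss: "gaussian_proc N A Slim"
    and Slim_cont: "AE \<omega> in N. continuous_on A (\<lambda>\<alpha>. Slim \<alpha> \<omega>)"
    and Slim_mean: "\<forall>\<alpha>\<in>A. \<forall>i. integrable N (\<lambda>\<omega>. Slim \<alpha> \<omega> $ i)
                   \<and> integral\<^sup>L N (\<lambda>\<omega>. Slim \<alpha> \<omega> $ i) = 0"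
    and Slim_cov: "\<forall>\<alpha>\<in>A. \<forall>i j. integrable N (\<lambda>\<omega>. Slim \<alpha> \<omega> $ i * Slim \<alpha> \<omega> $ j)
                   \<and> integral\<^sup>L N (\<lambda>\<omega>. Slim \<alpha> \<omega> $ i * Slim \<alpha> \<omega> $ j) = I \<alpha> $ i $ j"
    \<comment> \<open>Assumption 5(iii)\<close>
    and I_sym: "\<forall>\<alpha>\<in>A. transpose (I \<alpha>) = I \<alpha>"
    and I_cont: "continuous_on A I"
    and I_min: "\<exists>c>0. \<forall>\<alpha>\<in>A. c \<le> lambda_min (I \<alpha>)"
    and I_max: "\<exists>C. \<forall>\<alpha>\<in>A. lambda_max (I \<alpha>) \<le> C"
    \<comment> \<open>Assumption 5(iv)\<close>
    and R_small: "\<forall>\<gamma> :: nat \<Rightarrow> real. (\<forall>T. 0 < \<gamma> T) \<longrightarrow> \<gamma> \<longlonglongrightarrow> 0 \<longrightarrow>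
        uo_p M (\<lambda>T. {(\<alpha>, p). \<alpha> \<in> A \<and> p \<in> Par \<alpha> \<and> norm (p - pstar) \<le> \<gamma> T})
          (\<lambda>T (\<alpha>, p) \<omega>. R T \<alpha> p \<omega> / (1 + norm (sqrt (real T) *\<^sub>R \<theta> \<alpha> p))\<^sup>2)"
    \<comment> \<open>Assumption 6\<close>
    and Lambda_cone: "cone_pos \<Lambda>"
    and loc_eq: "loc_unif_equal A (\<lambda>\<alpha>. \<theta> \<alpha> ` Par \<alpha>) \<Lambda>"
  shows "uo_p M (\<lambda>T. A)
    (\<lambda>T \<alpha> \<omega>. let Z = matrix_inv (I \<alpha>) *v ((1 / sqrt (real T)) *\<^sub>R S T \<alpha> \<omega>) in
       Inf {(l - Z) \<bullet> (I \<alpha> *v (l - Z)) | l. l \<in> (\<lambda>x. sqrt (real T) *\<^sub>R x) ` (\<theta> \<alpha> ` Par \<alpha>)}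
       - Inf {(l - Z) \<bullet> (I \<alpha> *v (l - Z)) | l. l \<in> \<Lambda>})"
proof -
  obtain c where c: "c > 0" "\<forall>\<alpha>\<in>A. c \<le> lambda_min (I \<alpha>)" using I_min by blast
  have pd: "c * (norm x)\<^sup>2 \<le> x \<bullet> (I \<alpha> *v x)" if "\<alpha> \<in> A" for \<alpha> x
    using c(2) that lambda_min_le_quadratic_form[of "I \<alpha>" x] I_sym
    by (meson mult_right_mono order_trans zero_le_power2)
  obtain \<delta> where \<delta>: "\<delta> > 0" and Th_cube: "\<forall>\<alpha>\<in>A. \<theta> \<alpha> ` Par \<alpha> \<inter> open_cube \<delta> = \<Lambda> \<inter> open_cube \<delta>"
    using loc_eq unfolding loc_unif_equal_def open_cube_def by blast
  define X where "X = (\<lambda>T \<alpha> \<omega>. (1 / sqrt (real T)) *\<^sub>R S T \<alpha> \<omega>)"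
  define r where "r T = c * \<delta> / 2 * sqrt (real T)" for T :: nat
  have X_meas: "X T \<alpha> \<in> borel_measurable M" if "\<alpha> \<in> A" for T \<alpha>
  proof -
    have "(\<lambda>\<omega>. \<Sum>t=1..T. s t \<alpha> \<omega>) \<in> borel_measurable M" using s_meas that by (intro borel_measurable_sum) auto
    hence "S T \<alpha> \<in> borel_measurable M" using S_sum that by (subst measurable_cong) auto
    thus ?thesis unfolding X_def by measurable
  qed
  have X_cont: "continuous_on A (\<lambda>\<alpha>. X T \<alpha> \<omega>)" if "\<omega> \<in> space M" for T \<omega>
    unfolding X_def using S_cont that by (intro continuous_intros) auto
  have r_lim: "filterlim r at_top sequentially"
    unfolding r_def
  proof (rule filterlim_tendsto_pos_mult_at_top[OF tendsto_const])
    show "0 < c * \<delta> / 2" using c(1) \<delta> by simp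
    show "filterlim (\<lambda>T. sqrt (real T)) at_top sequentially"
      by (rule filterlim_compose[OF sqrt_at_top filterlim_real_sequentially])
  qed
  obtain E where E: "\<And>T. E T \<in> sets M"
      "\<And>T. {\<omega>\<in>space M. \<exists>\<alpha>\<in>A. r T < norm (X T \<alpha> \<omega>)} \<subseteq> E T" "(\<lambda>T. measure M (E T)) \<longlonglongrightarrow> 0"
    using weak_conv_proc_norm_bounded_in_probability[OF probM probN A_compact S_weak[folded X_def]
        X_meas X_cont Slim_meas[rule_format] Slim_cont r_lim] by blast
  show ?thesis
  proof (rule uo_pI_eventually_vanishing_outside[OF E(1,3)])
    have "Inf {(l - Z) \<bullet> (I \<alpha> *v (l - Z)) | l. l \<in> (\<lambda>x. sqrt (real T) *\<^sub>R x) ` (\<theta> \<alpha> ` Par \<alpha>)}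
        = Inf {(l - Z) \<bullet> (I \<alpha> *v (l - Z)) | l. l \<in> \<Lambda>}"
      if "T > 0" "\<omega> \<in> space M - E T" "\<alpha> \<in> A" "Z = matrix_inv (I \<alpha>) *v X T \<alpha> \<omega>" for T \<omega> \<alpha> Z
    proof (rule Inf_pos_def_form_scaled_eq_cone[OF c(1) pd Lambda_cone _ \<delta> _ _ _ that(4)])
      show "0 \<in> \<theta> \<alpha> ` Par \<alpha>" using that(3) pstar_in theta_pstar by force
      show "norm (X T \<alpha> \<omega>) \<le> c * \<delta> * sqrt (real T) / 2"
        using E(2)[of T] that(2,3) by (force simp: r_def)
    qed (use that Th_cube in auto)
    thus "eventually (\<lambda>T. \<forall>\<omega>\<in>space M - E T. \<forall>\<alpha>\<in>A. (let Z = matrix_inv (I \<alpha>) *v ((1 / sqrt (real T)) *\<^sub>R S T \<alpha> \<omega>) in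
       Inf {(l - Z) \<bullet> (I \<alpha> *v (l - Z)) | l. l \<in> (\<lambda>x. sqrt (real T) *\<^sub>R x) ` (\<theta> \<alpha> ` Par \<alpha>)}
       - Inf {(l - Z) \<bullet> (I \<alpha> *v (l - Z)) | l. l \<in> \<Lambda>}) = 0) sequentially"
      unfolding eventually_sequentially Let_def X_def by (intro exI[of _ 1]) simp
  qed
qed

end
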